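(* Let $A=\{a_0,a_1,\dots,a_{k-1}\}\subseteq\mathcal{C}_n$ with $a_0<\dots<a_{k-1}$, and assume the simplex $\sigma^{(n)}_k(A)$ is internal, i.e. $0\notin A$ and $n-1\notin A$. Let $m\in\{0,\dots,k-1\}$. Then the set $\mathcal{DN}^{\,2}_m=\{\overline{a_m}\}\cup\mathcal{L}^{n-1}_{a_m}\left(\sigma^{(n)}_k(A)\right)\cup\mathcal{L}^{n-2}_{a_m}\left(\sigma^{(n)}_k(A)\right)$ is a subsemiring of $\sigma^{(n)}_k(A)$.
   Context: $\mathcal{C}_n=\{0,1,\dots,n-1\}$ with its usual order; $\widehat{\mathcal{E}}_{\mathcal{C}_n}$ is the set of all order-preserving maps $\mathcal{C}_n\to\mathcal{C}_n$ (not required to fix $0$), a semiring with $(\alpha+\beta)(x)=\max(\alpha(x),\beta(x))$ and $(\alpha\cdot\beta)(x)=\beta(\alpha(x))$. The simplex $\sigma^{(n)}_k(A)$ is the set of all $\alpha\in\widehat{\mathcal{E}}_{\mathcal{C}_n}$ with $\mathrm{im}(\alpha)\subseteq A$. $\overline{x}$ is the constant map with value $x$. For $s\in\{0,\dots,n-1\}$, the layer $\mathcal{L}^{s}_{a_m}\left(\sigma^{(n)}_k(A)\right)$ is the set of $\alpha\in\sigma^{(n)}_k(A)$ with exactly $s$ elements $i\in\mathcal{C}_n$ satisfying $\alpha(i)=a_m$. *)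

theory Defs
  imports Main "HOL-Library.FuncSet"
begin

text \<open>Order-preserving maps C_n -> C_n, C_n = {0..<n}, represented as
  extensional functions on {0..<n}.\<close>
definition endos :: "nat \<Rightarrow> (nat \<Rightarrow> nat) set" where
  "endos n = {\<alpha> \<in> extensional {0..<n}. \<alpha> ` {0..<n} \<subseteq> {0..<n} \<and> mono_on {0..<n} \<alpha>}"

definition splus :: "nat \<Rightarrow> (nat \<Rightarrow> nat) \<Rightarrow> (nat \<Rightarrow> nat) \<Rightarrow> (nat \<Rightarrow> nat)" where
  "splus n \<alpha> \<beta> = (\<lambda>x\<in>{0..<n}. max (\<alpha> x) (\<beta> x))"

definition stimes :: "nat \<Rightarrow> (nat \<Rightarrow> nat) \<Rightarrow> (nat \<Rightarrow> nat) \<Rightarrow> (nat \<Rightarrow> nat)" where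
  "stimes n \<alpha> \<beta> = (\<lambda>x\<in>{0..<n}. \<beta> (\<alpha> x))"

definition simplex :: "nat \<Rightarrow> nat set \<Rightarrow> (nat \<Rightarrow> nat) set" where
  "simplex n A = {\<alpha> \<in> endos n. \<alpha> ` {0..<n} \<subseteq> A}"

definition const_map :: "nat \<Rightarrow> nat \<Rightarrow> (nat \<Rightarrow> nat)" where
  "const_map n x = (\<lambda>_\<in>{0..<n}. x)"

definition layer :: "nat \<Rightarrow> nat \<Rightarrow> nat \<Rightarrow> (nat \<Rightarrow> nat) set \<Rightarrow> (nat \<Rightarrow> nat) set" where
  "layer n s a S = {\<alpha> \<in> S. card {i \<in> {0..<n}. \<alpha> i = a} = s}"

definition subsemiring :: "nat \<Rightarrow> (nat \<Rightarrow> nat) set \<Rightarrow> (nat \<Rightarrow> nat) set \<Rightarrow> bool" where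
  "subsemiring n T S \<longleftrightarrow> T \<noteq> {} \<and> T \<subseteq> S \<and>
     (\<forall>\<alpha>\<in>T. \<forall>\<beta>\<in>T. splus n \<alpha> \<beta> \<in> T \<and> stimes n \<alpha> \<beta> \<in> T)"

end

theory Submission
  imports Defs
begin

text \<open>A map in the simplex lies in \<open>DN\<^sup>2\<^sub>m\<close> iff it differs from the constant map with value
  \<open>a = a\<^sub>m\<close> in at most two points. For the sum (pointwise \<open>max\<close>) the points mapped above \<open>a\<close> form
  an up-set, and up-sets of \<open>C\<^sub>n\<close> are nested; the points mapped below \<open>a\<close> by the sum are those
  mapped below \<open>a\<close> by both summands. Hence the sum has no more defects than one of the summands.
  For the product \<open>\<alpha> \<cdot> \<beta> = \<beta> \<circ> \<alpha>\<close> it suffices that \<open>\<beta>\<close> fixes \<open>a\<close>: a monotone map with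
  \<open>\<beta> a \<noteq> a\<close> misses \<open>a\<close> on a whole initial or final segment through \<open>a\<close>, and since \<open>\<beta> a\<close> avoids
  the extreme points \<open>0\<close> and \<open>n - 1\<close>, that segment has at least three points.\<close>

definition defects :: "nat \<Rightarrow> nat \<Rightarrow> (nat \<Rightarrow> nat) \<Rightarrow> nat set" where
  "defects n a \<alpha> = {i \<in> {0..<n}. \<alpha> i \<noteq> a}"

lemma finite_defects [simp]: "finite (defects n a \<alpha>)"
  by (simp add: defects_def)

lemma card_level_set_plus_card_defects:
  "card {i \<in> {0..<n}. \<alpha> i = a} + card (defects n a \<alpha>) = n"
proof -
  have "{i \<in> {0..<n}. \<alpha> i = a} \<union> defects n a \<alpha> = {0..<n}"
    and "{i \<in> {0..<n}. \<alpha> i = a} \<inter> defects n a \<alpha> = {}"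
    by (auto simp: defects_def)
  then show ?thesis
    by (metis card_Un_disjoint card_atLeastLessThan finite_Un finite_atLeastLessThan minus_nat.diff_0)
qed

lemma defects_empty_iff_const_map:
  assumes "\<alpha> \<in> extensional {0..<n}"
  shows "defects n a \<alpha> = {} \<longleftrightarrow> \<alpha> = const_map n a"
  using assms by (auto simp: defects_def const_map_def extensional_def fun_eq_iff)

lemma endosD:
  assumes "\<alpha> \<in> endos n"
  shows "\<alpha> \<in> extensional {0..<n}" and "i < n \<Longrightarrow> \<alpha> i < n"
    and "i \<le> j \<Longrightarrow> j < n \<Longrightarrow> \<alpha> i \<le> \<alpha> j"
  using assms by (auto simp: endos_def mono_on_def image_subset_iff)

lemma const_map_in_simplex:
  assumes "a \<in> A" "a < n"
  shows "const_map n a \<in> simplex n A"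
  using assms by (auto simp: simplex_def endos_def const_map_def mono_on_def)

lemma splus_in_simplex:
  assumes "\<alpha> \<in> simplex n A" "\<beta> \<in> simplex n A"
  shows "splus n \<alpha> \<beta> \<in> simplex n A"
proof -
  have "max (\<alpha> i) (\<beta> i) \<le> max (\<alpha> j) (\<beta> j)" if "i \<le> j" "j < n" for i j
    using assms that by (intro max.mono) (auto simp: simplex_def dest: endosD(3))
  moreover have "max (\<alpha> i) (\<beta> i) \<in> A \<inter> {0..<n}" if "i < n" for i
    using assms that by (auto simp: simplex_def endos_def image_subset_iff max_def)
  ultimately show ?thesis
    by (auto simp: simplex_def endos_def splus_def mono_on_def)
qed

lemma stimes_in_simplex:
  assumes "\<alpha> \<in> simplex n A" "\<beta> \<in> simplex n A"
  shows "stimes n \<alpha> \<beta> \<in> simplex n A"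
proof -
  have "\<beta> (\<alpha> i) \<le> \<beta> (\<alpha> j)" if "i \<le> j" "j < n" for i j
    using assms that by (auto simp: simplex_def intro: endosD(3) dest: endosD(2))
  moreover have "\<beta> (\<alpha> i) \<in> A \<inter> {0..<n}" if "i < n" for i
    using assms that by (auto simp: simplex_def endos_def image_subset_iff)
  ultimately show ?thesis
    by (auto simp: simplex_def endos_def stimes_def mono_on_def)
qed

lemma nested_if_downward_closed:
  fixes P Q :: "'a::linorder \<Rightarrow> bool"
  assumes "\<And>i j. i \<le> j \<Longrightarrow> P j \<Longrightarrow> P i" and "\<And>i j. i \<le> j \<Longrightarrow> Q j \<Longrightarrow> Q i"
  shows "Collect P \<subseteq> Collect Q \<or> Collect Q \<subseteq> Collect P"
  using assms by (metis mem_Collect_eq nle_le subsetI)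

lemma card_defects_splus_le:
  assumes "\<alpha> \<in> endos n" "\<beta> \<in> endos n"
  shows "card (defects n a (splus n \<alpha> \<beta>)) \<le> max (card (defects n a \<alpha>)) (card (defects n a \<beta>))"
proof -
  define below where "below \<gamma> = {i. i < n \<and> \<gamma> i < a}" for \<gamma> :: "nat \<Rightarrow> nat"
  define above where "above \<gamma> = {i. i < n \<and> a < \<gamma> i}" for \<gamma> :: "nat \<Rightarrow> nat"
  have card_defects: "card (defects n a \<gamma>) = card (below \<gamma>) + card (above \<gamma>)" for \<gamma>
  proof -
    have "defects n a \<gamma> = below \<gamma> \<union> above \<gamma>" "below \<gamma> \<inter> above \<gamma> = {}"
      by (auto simp: defects_def below_def above_def)
    then show ?thesis by (simp add: below_def above_def card_Un_disjoint)
  qed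
  have "{i. i < n \<and> \<alpha> i \<le> a} \<subseteq> {i. i < n \<and> \<beta> i \<le> a}
      \<or> {i. i < n \<and> \<beta> i \<le> a} \<subseteq> {i. i < n \<and> \<alpha> i \<le> a}"
    by (rule nested_if_downward_closed)
      (use endosD(3)[OF assms(1)] endosD(3)[OF assms(2)] in \<open>fastforce+\<close>)
  then have above_nested: "above \<alpha> \<subseteq> above \<beta> \<or> above \<beta> \<subseteq> above \<alpha>"
    unfolding above_def by auto
  have below_splus: "below (splus n \<alpha> \<beta>) = below \<alpha> \<inter> below \<beta>"
    and above_splus: "above (splus n \<alpha> \<beta>) = above \<alpha> \<union> above \<beta>"
    by (auto simp: below_def above_def splus_def)
  have finite_below: "finite (below \<gamma>)" for \<gamma> by (simp add: below_def)
  from above_nested show ?thesis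
  proof
    assume "above \<alpha> \<subseteq> above \<beta>"
    then have "card (defects n a (splus n \<alpha> \<beta>)) \<le> card (defects n a \<beta>)"
      unfolding card_defects below_splus above_splus
      by (simp add: Un_absorb1 card_mono finite_below)
    then show ?thesis by simp
  next
    assume "above \<beta> \<subseteq> above \<alpha>"
    then have "card (defects n a (splus n \<alpha> \<beta>)) \<le> card (defects n a \<alpha>)"
      unfolding card_defects below_splus above_splus
      by (simp add: Un_absorb2 card_mono finite_below)
    then show ?thesis by simp
  qed
qed

lemma defects_stimes_subset:
  assumes "\<beta> a = a"
  shows "defects n a (stimes n \<alpha> \<beta>) \<subseteq> defects n a \<alpha>"
  using assms by (auto simp: defects_def stimes_def)

lemma few_defects_imp_fixed:
  assumes "\<alpha> \<in> endos n" "a < n" "0 < \<alpha> a" "\<alpha> a < n - 1"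
    and "card (defects n a \<alpha>) \<le> 2"
  shows "\<alpha> a = a"
proof (rule ccontr)
  assume "\<alpha> a \<noteq> a"
  then consider "\<alpha> a < a" | "a < \<alpha> a" by linarith
  then have "3 \<le> card (defects n a \<alpha>)"
  proof cases
    case 1
    with assms(1,2) have "{0..a} \<subseteq> defects n a \<alpha>"
      by (auto simp: defects_def dest: endosD(3)[of \<alpha> n _ a])
    then have "card {0..a} \<le> card (defects n a \<alpha>)" by (intro card_mono) simp_all
    with 1 assms(3) show ?thesis by simp
  next
    case 2
    with assms(1) have "{a..<n} \<subseteq> defects n a \<alpha>"
      by (auto simp: defects_def dest: endosD(3)[of \<alpha> n a])
    then have "card {a..<n} \<le> card (defects n a \<alpha>)" by (intro card_mono) simp_all
    with 2 assms(4) show ?thesis by simp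
  qed
  with assms(5) show False by simp
qed

lemma subsemiring_few_defects:
  assumes "A \<subseteq> {0..<n}" "a \<in> A" "0 \<notin> A" "n - 1 \<notin> A"
  shows "subsemiring n {\<alpha> \<in> simplex n A. card (defects n a \<alpha>) \<le> 2} (simplex n A)"
proof -
  let ?D = "{\<alpha> \<in> simplex n A. card (defects n a \<alpha>) \<le> 2}"
  have "a < n" using assms(1,2) by auto
  have "const_map n a \<in> ?D"
    using const_map_in_simplex[OF assms(2) \<open>a < n\<close>] by (simp add: defects_def const_map_def)
  moreover have "splus n \<alpha> \<beta> \<in> ?D \<and> stimes n \<alpha> \<beta> \<in> ?D" if "\<alpha> \<in> ?D" "\<beta> \<in> ?D" for \<alpha> \<beta>
  proof
    have simplex: "\<alpha> \<in> simplex n A" "\<beta> \<in> simplex n A"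
      and few: "card (defects n a \<alpha>) \<le> 2" "card (defects n a \<beta>) \<le> 2"
      using that by simp_all
    then have endos: "\<alpha> \<in> endos n" "\<beta> \<in> endos n" by (simp_all add: simplex_def)
    show "splus n \<alpha> \<beta> \<in> ?D"
      using splus_in_simplex[OF simplex] card_defects_splus_le[OF endos, of a] few by simp
    have "\<beta> a \<in> A" using simplex(2) \<open>a < n\<close> by (auto simp: simplex_def)
    with assms(3,4) have "\<beta> a \<noteq> 0" "\<beta> a \<noteq> n - 1" by metis+
    moreover have "\<beta> a < n" using endosD(2)[OF endos(2) \<open>a < n\<close>] .
    ultimately have "\<beta> a = a"
      using few_defects_imp_fixed[OF endos(2) \<open>a < n\<close> _ _ few(2)] by simp
    then have "card (defects n a (stimes n \<alpha> \<beta>)) \<le> card (defects n a \<alpha>)"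
      by (intro card_mono defects_stimes_subset) simp_all
    then show "stimes n \<alpha> \<beta> \<in> ?D"
      using stimes_in_simplex[OF simplex] few(1) by simp
  qed
  ultimately show ?thesis unfolding subsemiring_def by blast
qed

lemma layers_union_eq_few_defects:
  assumes "S \<subseteq> extensional {0..<n}" "const_map n a \<in> S"
  shows "{const_map n a} \<union> layer n (n - 1) a S \<union> layer n (n - 2) a S
    = {\<alpha> \<in> S. card (defects n a \<alpha>) \<le> 2}"
proof -
  have "\<alpha> = const_map n a \<or> card {i \<in> {0..<n}. \<alpha> i = a} \<in> {n - 1, n - 2}
      \<longleftrightarrow> card (defects n a \<alpha>) \<le> 2" if "\<alpha> \<in> S" for \<alpha>
  proof -
    have "card {i \<in> {0..<n}. \<alpha> i = a} = n - card (defects n a \<alpha>)"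
      and "card (defects n a \<alpha>) \<le> n"
      using card_level_set_plus_card_defects[of n \<alpha> a] by linarith+
    moreover have "\<alpha> = const_map n a \<longleftrightarrow> card (defects n a \<alpha>) = 0"
      using defects_empty_iff_const_map[of \<alpha> n a] assms(1) that by auto
    ultimately show ?thesis by (auto simp del: card_0_eq)
  qed
  with assms(2) show ?thesis by (auto simp: layer_def)
qed

theorem proposition4:
  fixes n k m :: nat and A :: "nat set"
  assumes "A \<subseteq> {0..<n}" and "card A = k"
    and "0 \<notin> A" and "n - 1 \<notin> A"
    and "m < k"
  shows "subsemiring n
     ({const_map n (sorted_list_of_set A ! m)}
      \<union> layer n (n - 1) (sorted_list_of_set A ! m) (simplex n A)
      \<union> layer n (n - 2) (sorted_list_of_set A ! m) (simplex n A))
     (simplex n A)"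
proof -
  define a where "a = sorted_list_of_set A ! m"
  have "finite A" using assms(1) finite_subset by blast
  with assms(2,5) have "a \<in> A"
    unfolding a_def by (metis length_sorted_list_of_set nth_mem set_sorted_list_of_set)
  then have "const_map n a \<in> simplex n A"
    using assms(1) by (intro const_map_in_simplex) auto
  moreover have "simplex n A \<subseteq> extensional {0..<n}"
    by (auto simp: simplex_def endos_def)
  ultimately show ?thesis
    using layers_union_eq_few_defects subsemiring_few_defects[OF assms(1) \<open>a \<in> A\<close> assms(3,4)]
    unfolding a_def[symmetric] by simp
qed

end
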